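(* Assume in addition that $l$ is $\mu$-strongly convex on $\mathcal{X}$ for some $\mu>0$. Let $(y^{k},x^{k})_{k\ge0}$ be generated by SPDHG (as in the context) with step-sizes $\beta^{k+1}=\frac{1}{\mu(k+1)+L}$. For any saddle point $(y^*,x^* )$ of $\min_{x\in\mathcal{X}}\max_{y\in\mathcal{Y}}P(y,x)$ and every $k\ge0$, $$0 \geq \mathbb{E}\left[ P(y^{k+1},x^* ) - P(y^*,x^{k+1}) \right] \geq \frac{\mu(k+1)+L}{2}\mathbb{E}\| x^*-x^{k+1}\|^2 + \frac{1}{2s}\mathbb{E}\| y^*-y^{k+1}\|^2 -\frac{\mu k+L}{2}\mathbb{E}\| x^*-x^k\|^2 - \frac{1}{2s}\mathbb{E}\| y^*-y^k\|^2 - \frac{\lambda_{\max}(F^\top F)D_y^2+\sigma^2}{\mu(k+1)}.$$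
   Context: Setting: $\mathcal{X}\subset\mathbb{R}^d$ is a nonempty convex compact set, $\mathcal{Y}\subset\mathbb{R}^l$ is a nonempty convex compact set with diameter $D_y$ (so $\|y-y'\|\le D_y$ for all $y,y'\in\mathcal{Y}$), $F\in\mathbb{R}^{l\times d}$, and $\lambda_{\max}(F^\top F)$ denotes the largest eigenvalue of $F^\top F$. The loss is $l(x)=\mathbb{E}_\xi[l(x,\xi)]$, a convex, continuously differentiable function on $\mathcal{X}$ with $L$-Lipschitz gradient: $\|\nabla l(x_1)-\nabla l(x_2)\|\le L\|x_1-x_2\|$ for all $x_1,x_2\in\mathcal{X}$. $\mu$-strong convexity means $l(y)-l(x)-(y-x)^\top\nabla l(x)\ge\frac{\mu}{2}\|y-x\|^2$ for all $x,y\in\mathcal{X}$. The stochastic gradient $\nabla l(x,\xi)$ satisfies, for every $x\in\mathcal{X}$: $\mathbb{E}[\nabla l(x,\xi)]=\nabla l(x)$ and $\mathbb{E}\|\nabla l(x,\xi)-\nabla l(x)\|^2\le\sigma^2$ for a constant $\sigma>0$. The saddle function is $P(y,x)=l(x)+\langle y,Fx\rangle$ for $x\in\mathcal{X},y\in\mathcal{Y}$; a saddle point $(y^*,x^* )$ satisfies $P(y,x^* )\le P(y^*,x^* )\le P(y^*,x)$ for all $(y,x)\in\mathcal{Y}\times\mathcal{X}$. SPDHG: fix $s>0$, $x^0\in\mathcal{X}$, $y^0\in\mathcal{Y}$, and step-sizes $\beta^{k+1}>0$. For $k=0,1,2,\dots$, draw a sample $\xi^{k+1}$ independently of the past (i.i.d.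 samples), and set $$y^{k+1}=\arg\max_{y\in\mathcal{Y}}\Big\{P(y,x^k)-\tfrac{1}{2s}\|y-y^k\|^2\Big\},\qquad x^{k+1}=\Pi_{\mathcal{X}}\Big[x^k-\beta^{k+1}\big(\nabla l(x^k,\xi^{k+1})+F^\top y^{k+1}\big)\Big],$$ where $\Pi_{\mathcal{X}}$ is Euclidean projection onto $\mathcal{X}$. *)

theory Defs
  imports "HOL-Probability.Probability"
begin

definition saddle_fun :: "(real^'d \<Rightarrow> real) \<Rightarrow> real^'d^'m \<Rightarrow> real^'m \<Rightarrow> real^'d \<Rightarrow> real" where
  "saddle_fun l F y x = l x + y \<bullet> (F *v x)"

text \<open>Largest eigenvalue of a square real matrix (used for F^T F, which is symmetric PSD).\<close>
definition lambda_max :: "real^'n^'n \<Rightarrow> real" where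
  "lambda_max A = Max {e. \<exists>v. v \<noteq> 0 \<and> A *v v = e *\<^sub>R v}"

definition is_saddle_point ::
  "(real^'m \<Rightarrow> real^'d \<Rightarrow> real) \<Rightarrow> (real^'m) set \<Rightarrow> (real^'d) set \<Rightarrow> real^'m \<Rightarrow> real^'d \<Rightarrow> bool" where
  "is_saddle_point P Y X ys xs \<longleftrightarrow> ys \<in> Y \<and> xs \<in> X \<and>
     (\<forall>y\<in>Y. \<forall>x\<in>X. P y xs \<le> P ys xs \<and> P ys xs \<le> P ys x)"

end

theory Submission
  imports Defs
begin

(*
  Pointwise, one SPDHG step obeys a deterministic inequality: the variational inequalities of the
  two projections, the descent lemma for the L-smooth l and the mu-strong convexity of l combine,
  after polarisation, into the claimed telescoping bound; the two cross terms involving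
  x^{k+1} - x^k (the coupling <F^T (y* - y^{k+1}), x^{k+1} - x^k> and the gradient noise) are
  absorbed by Young's inequality into the surplus mu (k+1)/2 |x^{k+1} - x^k|^2 provided by the
  step size, at the cost of (lambda_max(F^T F) D_y^2 + |noise|^2) / (mu (k+1)), leaving the term
  <noise, x^k - x*>.  Since x^k is a measurable function of the samples xi_0, ..., xi_{k-1}, it is
  independent of xi_k, so in expectation this last term vanishes and |noise|^2 is at most sigma^2.
  The upper bound 0 is just the saddle-point inequality.
*)

section \<open>The largest eigenvalue of \<open>F\<^sup>T F\<close>\<close>

lemma inner_transpose_mult_matrix:
  fixes F :: "real^'d^'m" and u v :: "real^'d"
  shows "u \<bullet> ((transpose F ** F) *v v) = (F *v u) \<bullet> (F *v v)"
proof -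
  have "(transpose F ** F) *v v = transpose F *v (F *v v)" by (simp add: matrix_vector_mul_assoc)
  also have "u \<bullet> \<dots> = (F *v u) \<bullet> (F *v v)"
    by (metis dot_lmul_matrix inner_commute transpose_matrix_vector vector_transpose_matrix)
  finally show ?thesis .
qed

lemma inner_transpose_mult_matrix_commute:
  fixes F :: "real^'d^'m"
  shows "u \<bullet> ((transpose F ** F) *v v) = v \<bullet> ((transpose F ** F) *v u)"
  by (simp add: inner_transpose_mult_matrix inner_commute)

lemma finite_eigenvalues_symmetric:
  fixes A :: "real^'n^'n"
  assumes symm: "\<And>u v. u \<bullet> (A *v v) = v \<bullet> (A *v u)"
  shows "finite {e. \<exists>v. v \<noteq> 0 \<and> A *v v = e *\<^sub>R v}"
proof -
  let ?S = "{e. \<exists>v. v \<noteq> 0 \<and> A *v v = e *\<^sub>R v}"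
  define u where "u e = (SOME v. v \<noteq> 0 \<and> A *v v = e *\<^sub>R v)" for e
  have u: "u e \<noteq> 0 \<and> A *v u e = e *\<^sub>R u e" if "e \<in> ?S" for e
    using that someI_ex[of "\<lambda>v. v \<noteq> 0 \<and> A *v v = e *\<^sub>R v"] unfolding u_def by blast
  have inj: "inj_on u ?S"
  proof (rule inj_onI)
    fix a b assume a: "a \<in> ?S" and b: "b \<in> ?S" and "u a = u b"
    then have "a *\<^sub>R u a = b *\<^sub>R u a" using u[OF a] u[OF b] by metis
    then show "a = b" using u[OF a] by simp
  qed
  \<comment> \<open>eigenvectors of a symmetric matrix for distinct eigenvalues are orthogonal\<close>
  have "pairwise orthogonal (u ` ?S)"
  proof (rule pairwiseI)
    fix x y assume "x \<in> u ` ?S" "y \<in> u ` ?S" "x \<noteq> y"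
    then obtain a b where a: "a \<in> ?S" and b: "b \<in> ?S" and xy: "x = u a" "y = u b" "a \<noteq> b"
      by blast
    have "a * (u a \<bullet> u b) = u b \<bullet> (A *v u a)" using u[OF a] by (simp add: inner_commute)
    also have "\<dots> = u a \<bullet> (A *v u b)" by (rule symm)
    also have "\<dots> = b * (u a \<bullet> u b)" using u[OF b] by simp
    finally show "orthogonal x y" using xy by (simp add: orthogonal_def)
  qed
  moreover have "0 \<notin> u ` ?S" using u by force
  ultimately have "finite (u ` ?S)"
    using pairwise_orthogonal_independent independent_bound by blast
  then show ?thesis using inj finite_imageD by blast
qed

lemma psd_form_zero_imp_zero:
  fixes f :: "'a::real_inner \<Rightarrow> 'a"
  assumes lin: "linear f" and symm: "\<And>u v. u \<bullet> f v = v \<bullet> f u"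
    and psd: "\<And>w. 0 \<le> w \<bullet> f w" and zero: "v \<bullet> f v = 0"
  shows "f v = 0"
proof (rule ccontr)
  assume "f v \<noteq> 0"
  define w where "w = f v"
  define a where "a = w \<bullet> w"
  define b where "b = w \<bullet> f w"
  have a: "0 < a" using \<open>f v \<noteq> 0\<close> by (simp add: a_def w_def)
  have b: "0 \<le> b" using psd by (simp add: b_def)
  have expand: "(v - t *\<^sub>R w) \<bullet> f (v - t *\<^sub>R w) = t\<^sup>2 * b - 2 * t * a" for t
    using zero symm[of v w]
    by (simp add: linear_diff[OF lin] linear_scale[OF lin] inner_diff inner_commute a_def b_def
        w_def power2_eq_square algebra_simps)
  define t where "t = a / (b + 1)"
  have "t > 0" using a b by (simp add: t_def)
  have "t * b \<le> a" using a b by (simp add: t_def field_simps)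
  then have "t\<^sup>2 * b - 2 * t * a < 0"
    using \<open>t > 0\<close> a by (simp add: power2_eq_square)
  with expand[of t] psd[of "v - t *\<^sub>R w"] show False by simp
qed

lemma quadratic_form_le_lambda_max:
  fixes A :: "real^'n^'n"
  assumes symm: "\<And>u v. u \<bullet> (A *v v) = v \<bullet> (A *v u)"
  shows "v \<bullet> (A *v v) \<le> lambda_max A * (norm v)\<^sup>2"
proof -
  let ?q = "\<lambda>v. v \<bullet> (A *v v)"
  have "continuous_on (sphere 0 1) ?q"
    by (intro continuous_on_inner continuous_on_id continuous_on_subset[OF matrix_vector_mult_linear_continuous_on]) auto
  moreover have "sphere (0::real^'n) 1 \<noteq> {}" by simp
  ultimately obtain v0 where v0: "v0 \<in> sphere 0 1" and max: "\<And>w. w \<in> sphere 0 1 \<Longrightarrow> ?q w \<le> ?q v0"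
    using continuous_attains_sup[OF compact_sphere] by blast
  define m where "m = ?q v0"
  have bound: "?q w \<le> m * (norm w)\<^sup>2" for w
  proof (cases "w = 0")
    case False
    then have "(1 / norm w) *\<^sub>R w \<in> sphere 0 1" by simp
    then have "?q ((1 / norm w) *\<^sub>R w) \<le> m" unfolding m_def by (rule max)
    moreover have "A *v ((1 / norm w) *\<^sub>R w) = (1 / norm w) *\<^sub>R (A *v w)"
      by (rule matrix_vector_mult_scaleR)
    ultimately have "?q w / (norm w)\<^sup>2 \<le> m" by (simp add: power2_eq_square)
    then show ?thesis using False by (simp add: divide_le_eq)
  qed simp
  \<comment> \<open>\<open>m I - A\<close> is positive semidefinite and its quadratic form vanishes at \<open>v0\<close>\<close>
  have "m *\<^sub>R v0 - A *v v0 = 0"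
  proof (rule psd_form_zero_imp_zero[where f = "\<lambda>w. m *\<^sub>R w - A *v w"])
    show "linear (\<lambda>w. m *\<^sub>R w - A *v w)"
      by (rule linearI) (simp_all add: matrix_vector_right_distrib matrix_vector_mult_scaleR algebra_simps)
    show "u \<bullet> (m *\<^sub>R v - A *v v) = v \<bullet> (m *\<^sub>R u - A *v u)" for u v
      using symm[of u v] by (simp add: inner_diff_right inner_commute)
    show "0 \<le> w \<bullet> (m *\<^sub>R w - A *v w)" for w
      using bound[of w] by (simp add: inner_diff_right power2_norm_eq_inner)
    show "v0 \<bullet> (m *\<^sub>R v0 - A *v v0) = 0"
      using v0 by (simp add: inner_diff_right m_def power2_norm_eq_inner[symmetric])
  qed
  then have "v0 \<noteq> 0 \<and> A *v v0 = m *\<^sub>R v0" using v0 by auto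
  then have "m \<le> lambda_max A"
    unfolding lambda_max_def using finite_eigenvalues_symmetric[OF symm] by (intro Max_ge) auto
  then show ?thesis
    using bound[of v] by (smt (verit) mult_right_mono zero_le_power2)
qed

lemma lambda_max_transpose_mult_nonneg:
  fixes F :: "real^'d^'m"
  shows "0 \<le> lambda_max (transpose F ** F)"
proof -
  let ?e = "axis undefined 1 :: real^'d"
  have "0 \<le> (norm (F *v ?e))\<^sup>2" by simp
  also have "\<dots> = ?e \<bullet> ((transpose F ** F) *v ?e)"
    by (simp add: inner_transpose_mult_matrix power2_norm_eq_inner)
  also have "\<dots> \<le> lambda_max (transpose F ** F) * (norm ?e)\<^sup>2"
    by (rule quadratic_form_le_lambda_max[OF inner_transpose_mult_matrix_commute])
  finally show ?thesis by simp
qed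

lemma norm_transpose_mult_le_lambda_max:
  fixes F :: "real^'d^'m" and u :: "real^'m"
  shows "(norm (transpose F *v u))\<^sup>2 \<le> lambda_max (transpose F ** F) * (norm u)\<^sup>2"
proof (cases "transpose F *v u = 0")
  case True
  have "0 \<le> lambda_max (transpose F ** F) * (norm u)\<^sup>2"
    by (intro mult_nonneg_nonneg lambda_max_transpose_mult_nonneg zero_le_power2)
  then show ?thesis using True by simp
next
  case False
  define v where "v = transpose F *v u"
  \<comment> \<open>\<open>|v|\<^sup>2 = \<langle>u, F v\<rangle> \<le> |u| |F v|\<close> and \<open>|F v|\<^sup>2 \<le> \<lambda> |v|\<^sup>2\<close>, so \<open>|v|\<^sup>4 \<le> \<lambda> |u|\<^sup>2 |v|\<^sup>2\<close>\<close>
  have "(norm v)\<^sup>2 = u \<bullet> (F *v v)"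
    by (metis dot_lmul_matrix power2_norm_eq_inner transpose_matrix_vector v_def)
  also have "\<dots> \<le> norm u * norm (F *v v)" by (rule norm_cauchy_schwarz)
  finally have "((norm v)\<^sup>2)\<^sup>2 \<le> (norm u)\<^sup>2 * (norm (F *v v))\<^sup>2"
    by (metis power_mono power_mult_distrib zero_le_power2)
  moreover have "(norm (F *v v))\<^sup>2 = v \<bullet> ((transpose F ** F) *v v)"
    by (simp add: inner_transpose_mult_matrix power2_norm_eq_inner)
  moreover have "\<dots> \<le> lambda_max (transpose F ** F) * (norm v)\<^sup>2"
    by (rule quadratic_form_le_lambda_max[OF inner_transpose_mult_matrix_commute])
  ultimately have "(norm v)\<^sup>2 * (norm v)\<^sup>2 \<le> (lambda_max (transpose F ** F) * (norm u)\<^sup>2) * (norm v)\<^sup>2"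
    by (smt (verit) mult.assoc mult.commute mult_left_mono power2_eq_square zero_le_power2)
  moreover have "0 < (norm v)\<^sup>2" using False by (simp add: v_def)
  ultimately show ?thesis unfolding v_def by (rule mult_right_le_imp_le)
qed

section \<open>One step of SPDHG\<close>

lemma inner_le_Young:
  fixes u v :: "'a::real_inner"
  assumes "0 < p"
  shows "u \<bullet> v \<le> (norm u)\<^sup>2 / p + p / 4 * (norm v)\<^sup>2"
proof -
  have "0 \<le> (norm ((2 / p) *\<^sub>R u - v))\<^sup>2" by simp
  also have "\<dots> = 4 / p\<^sup>2 * (norm u)\<^sup>2 - 4 / p * (u \<bullet> v) + (norm v)\<^sup>2"
    unfolding power2_norm_eq_inner by (simp add: inner_diff inner_commute algebra_simps power2_eq_square)
  finally have "0 \<le> p / 4 * (4 / p\<^sup>2 * (norm u)\<^sup>2 - 4 / p * (u \<bullet> v) + (norm v)\<^sup>2)"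
    using assms by simp
  also have "\<dots> = (norm u)\<^sup>2 / p - u \<bullet> v + p / 4 * (norm v)\<^sup>2"
    using assms by (simp add: field_simps power2_eq_square)
  finally show ?thesis by simp
qed

lemma closest_point_three_point:
  fixes X :: "'a::euclidean_space set" and a v :: 'a and t :: real
  assumes "convex X" "closed X" "u \<in> X"
  defines "a' \<equiv> closest_point X (a - t *\<^sub>R v)"
  shows "(norm (a' - a))\<^sup>2 + (norm (u - a'))\<^sup>2 - (norm (u - a))\<^sup>2 \<le> 2 * t * (v \<bullet> (u - a'))"
proof -
  have "(a - t *\<^sub>R v - a') \<bullet> (u - a') \<le> 0"
    unfolding a'_def by (rule closest_point_dot[OF assms(1-3)])
  moreover have "2 * ((a - a') \<bullet> (u - a')) = (norm (a' - a))\<^sup>2 + (norm (u - a'))\<^sup>2 - (norm (u - a))\<^sup>2"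
    by (simp add: power2_norm_eq_inner inner_diff inner_commute algebra_simps)
  ultimately show ?thesis by (simp add: inner_diff_left)
qed

lemma argmax_inner_minus_sq_eq_closest_point:
  fixes Y :: "'a::euclidean_space set"
  assumes "convex Y" "closed Y" "y \<in> Y" "0 < s"
    and max: "\<forall>v\<in>Y. v \<bullet> c - 1 / (2 * s) * (norm (v - b))\<^sup>2 \<le> y \<bullet> c - 1 / (2 * s) * (norm (y - b))\<^sup>2"
  shows "y = closest_point Y (b + s *\<^sub>R c)"
proof (rule closest_point_unique[OF assms(1-3)], intro ballI)
  fix z assume "z \<in> Y"
  \<comment> \<open>completing the square: the objective is \<open>-1/(2s) |v - (b + s c)|\<^sup>2\<close> up to a constant\<close>
  have square: "(norm (v - (b + s *\<^sub>R c)))\<^sup>2 = - 2 * s * (v \<bullet> c - 1 / (2 * s) * (norm (v - b))\<^sup>2)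
      + 2 * s * (b \<bullet> c) + s\<^sup>2 * (norm c)\<^sup>2" for v
    using \<open>0 < s\<close> unfolding power2_norm_eq_inner
    by (simp add: inner_diff inner_add inner_commute field_simps power2_eq_square)
  have "(norm (y - (b + s *\<^sub>R c)))\<^sup>2 \<le> (norm (z - (b + s *\<^sub>R c)))\<^sup>2"
    unfolding square using max \<open>z \<in> Y\<close> \<open>0 < s\<close> by simp
  then have "norm (y - (b + s *\<^sub>R c)) \<le> norm (z - (b + s *\<^sub>R c))"
    by (rule power2_le_imp_le) simp
  then show "dist (b + s *\<^sub>R c) y \<le> dist (b + s *\<^sub>R c) z"
    by (simp add: dist_norm norm_minus_commute)
qed

lemma Lipschitz_gradient_upper_bound:
  fixes l :: "'a::real_inner \<Rightarrow> real" and gl :: "'a \<Rightarrow> 'a"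
  assumes "convex X"
    and l_deriv: "\<forall>z\<in>X. (l has_derivative (\<lambda>h. gl z \<bullet> h)) (at z within X)"
    and gl_lip: "\<forall>x1\<in>X. \<forall>x2\<in>X. norm (gl x1 - gl x2) \<le> L * norm (x1 - x2)"
    and "0 \<le> L" and a: "a \<in> X" and b: "b \<in> X"
  shows "l b \<le> l a + gl a \<bullet> (b - a) + L / 2 * (norm (b - a))\<^sup>2"
proof -
  define p where "p t = a + t *\<^sub>R (b - a)" for t :: real
  have pX: "p t \<in> X" if "t \<in> {0..1}" for t
  proof -
    have "p t = (1 - t) *\<^sub>R a + t *\<^sub>R b" by (simp add: p_def algebra_simps)
    then show ?thesis using convexD_alt[OF \<open>convex X\<close> a b, of t] that by auto
  qed
  \<comment> \<open>mean value theorem for \<open>l (p t)\<close> minus the claimed quadratic upper bound at \<open>p t\<close>\<close>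
  define \<phi> where "\<phi> t = l (p t) - t * (gl a \<bullet> (b - a)) - L / 2 * t\<^sup>2 * (norm (b - a))\<^sup>2" for t
  define \<phi>' where "\<phi>' t = (\<lambda>h. h * (gl (p t) \<bullet> (b - a) - gl a \<bullet> (b - a) - L * t * (norm (b - a))\<^sup>2))" for t
  have "(\<phi> has_derivative \<phi>' t) (at t within {0..1})" if t: "0 \<le> t" "t \<le> 1" for t
  proof -
    have dp: "(p has_derivative (\<lambda>h. h *\<^sub>R (b - a))) (at t within {0..1})"
      unfolding p_def by (auto intro!: derivative_eq_intros)
    have "((\<lambda>t. l (p t)) has_derivative (\<lambda>h. gl (p t) \<bullet> (h *\<^sub>R (b - a)))) (at t within {0..1})"
      by (rule has_derivative_in_compose2[where g=l and g'="\<lambda>z h. gl z \<bullet> h" and t=X, OF _ _ _ dp])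
         (use l_deriv pX t in auto)
    then show ?thesis unfolding \<phi>_def \<phi>'_def
      by (auto intro!: derivative_eq_intros simp: algebra_simps power2_eq_square)
  qed
  then obtain t where t: "t \<in> {0..1}" and eq: "\<phi> 1 - \<phi> 0 = \<phi>' t (1 - 0)"
    using mvt_very_simple[of 0 1 \<phi> \<phi>'] by auto
  have "gl (p t) \<bullet> (b - a) - gl a \<bullet> (b - a) \<le> norm (gl (p t) - gl a) * norm (b - a)"
    by (metis inner_diff_left norm_cauchy_schwarz)
  also have "\<dots> \<le> L * norm (p t - a) * norm (b - a)"
    using gl_lip pX[OF t] a by (intro mult_right_mono) auto
  also have "\<dots> = L * t * (norm (b - a))\<^sup>2" using t by (simp add: p_def power2_eq_square)
  finally have "\<phi> 1 \<le> \<phi> 0" using eq by (simp add: \<phi>'_def)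
  then show ?thesis by (simp add: \<phi>_def p_def)
qed

lemma smooth_strongly_convex_three_point:
  fixes l :: "'a::real_inner \<Rightarrow> real" and gl :: "'a \<Rightarrow> 'a"
  assumes "convex X"
    and l_deriv: "\<forall>z\<in>X. (l has_derivative (\<lambda>h. gl z \<bullet> h)) (at z within X)"
    and gl_lip: "\<forall>x1\<in>X. \<forall>x2\<in>X. norm (gl x1 - gl x2) \<le> L * norm (x1 - x2)" and "0 \<le> L"
    and strong: "\<forall>u\<in>X. \<forall>v\<in>X. l v - l u - (v - u) \<bullet> gl u \<ge> \<mu> / 2 * (norm (v - u))\<^sup>2"
    and "a \<in> X" "a' \<in> X" "u \<in> X"
  shows "l u - l a' \<ge> \<mu> / 2 * (norm (u - a))\<^sup>2 + gl a \<bullet> (u - a') - L / 2 * (norm (a' - a))\<^sup>2"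
proof -
  have "l a' \<le> l a + gl a \<bullet> (a' - a) + L / 2 * (norm (a' - a))\<^sup>2"
    by (rule Lipschitz_gradient_upper_bound) (use assms in auto)
  moreover have "l u - l a - (u - a) \<bullet> gl a \<ge> \<mu> / 2 * (norm (u - a))\<^sup>2"
    using strong assms by blast
  moreover have "(u - a) \<bullet> gl a - gl a \<bullet> (a' - a) = gl a \<bullet> (u - a')"
    by (simp add: inner_diff inner_commute)
  ultimately show ?thesis by linarith
qed

lemma spdhg_step_inequality:
  fixes X :: "(real^'d) set" and Y :: "(real^'m) set" and F :: "real^'d^'m"
    and l :: "real^'d \<Rightarrow> real" and gl :: "real^'d \<Rightarrow> real^'d"
    and a u a' g :: "real^'d" and b v b' :: "real^'m"
  assumes X: "convex X" "closed X" and Y: "convex Y" "closed Y" "bounded Y"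
    and l_deriv: "\<forall>z\<in>X. (l has_derivative (\<lambda>h. gl z \<bullet> h)) (at z within X)"
    and gl_lip: "\<forall>x1\<in>X. \<forall>x2\<in>X. norm (gl x1 - gl x2) \<le> L * norm (x1 - x2)" and L: "0 \<le> L"
    and strong: "\<forall>u\<in>X. \<forall>v\<in>X. l v - l u - (v - u) \<bullet> gl u \<ge> \<mu> / 2 * (norm (v - u))\<^sup>2"
    and p: "0 < p" and s: "0 < s"
    and a: "a \<in> X" and u: "u \<in> X" and v: "v \<in> Y"
    and b': "b' = closest_point Y (b + s *\<^sub>R (F *v a))"
    and a': "a' = closest_point X (a - (1 / (p + L)) *\<^sub>R (g + transpose F *v b'))"
  shows "saddle_fun l F b' u - saddle_fun l F v a'
      \<ge> (p + L) / 2 * (norm (u - a'))\<^sup>2 + 1 / (2 * s) * (norm (v - b'))\<^sup>2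
        - (p + L - \<mu>) / 2 * (norm (u - a))\<^sup>2 - 1 / (2 * s) * (norm (v - b))\<^sup>2
        - (lambda_max (transpose F ** F) * (diameter Y)\<^sup>2 + (norm (g - gl a))\<^sup>2) / p
        + (g - gl a) \<bullet> (a - u)"
proof -
  define \<delta> where "\<delta> = g - gl a"
  define w where "w = transpose F *v (v - b')"
  define K where "K = lambda_max (transpose F ** F) * (diameter Y)\<^sup>2"
  have "b' \<in> Y" unfolding b' using closest_point_in_set[OF Y(2)] v by blast
  have "a' \<in> X" unfolding a' using closest_point_in_set[OF X(2)] a by blast
  have "(norm (a' - a))\<^sup>2 + (norm (u - a'))\<^sup>2 - (norm (u - a))\<^sup>2
      \<le> 2 * (1 / (p + L)) * ((g + transpose F *v b') \<bullet> (u - a'))"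
    unfolding a' by (rule closest_point_three_point[OF X u])
  then have proj_x: "(p + L) / 2 * ((norm (a' - a))\<^sup>2 + (norm (u - a'))\<^sup>2 - (norm (u - a))\<^sup>2)
      \<le> g \<bullet> (u - a') + b' \<bullet> (F *v u) - b' \<bullet> (F *v a')"
    using p L by (simp add: field_simps inner_add_left inner_diff_right dot_lmul_matrix)
  have "(norm (b' - b))\<^sup>2 + (norm (v - b'))\<^sup>2 - (norm (v - b))\<^sup>2 \<le> 2 * s * (- (F *v a) \<bullet> (v - b'))"
    using closest_point_three_point[OF Y(1,2) v, of b s "- (F *v a)"] by (simp add: b')
  then have proj_y: "1 / (2 * s) * (norm (v - b'))\<^sup>2 - 1 / (2 * s) * (norm (v - b))\<^sup>2 \<le> - ((F *v a) \<bullet> (v - b'))"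
    using s by (simp add: field_simps) (smt (verit) zero_le_power2)
  have smooth: "l u - l a' \<ge> \<mu> / 2 * (norm (u - a))\<^sup>2 + gl a \<bullet> (u - a') - L / 2 * (norm (a' - a))\<^sup>2"
    by (rule smooth_strongly_convex_three_point[OF X(1) l_deriv gl_lip L strong a \<open>a' \<in> X\<close> u])
  \<comment> \<open>the two cross terms with \<open>a' - a\<close> are absorbed by the extra \<open>p/2 |a' - a|\<^sup>2\<close> of the step size\<close>
  have young_noise: "- \<delta> \<bullet> (a' - a) \<le> (norm \<delta>)\<^sup>2 / p + p / 4 * (norm (a' - a))\<^sup>2"
    using inner_le_Young[OF p, of "- \<delta>"] by simp
  have "(norm w)\<^sup>2 \<le> K"
  proof -
    have "norm (v - b') \<le> diameter Y"
      using diameter_bounded_bound[OF Y(3) v \<open>b' \<in> Y\<close>] by (simp add: dist_norm)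
    then have "(norm (v - b'))\<^sup>2 \<le> (diameter Y)\<^sup>2" by (simp add: power_mono)
    then show ?thesis unfolding K_def w_def
      using norm_transpose_mult_le_lambda_max[of F "v - b'"] lambda_max_transpose_mult_nonneg[of F]
      by (smt (verit) mult_left_mono)
  qed
  then have young_coupling: "w \<bullet> (a' - a) \<le> K / p + p / 4 * (norm (a' - a))\<^sup>2"
    using inner_le_Young[OF p, of w "a' - a"] p by (smt (verit) divide_right_mono)
  have coupling: "v \<bullet> (F *v a') - b' \<bullet> (F *v a') = (F *v a) \<bullet> (v - b') + w \<bullet> (a' - a)"
  proof -
    have "w \<bullet> (a' - a) = (v - b') \<bullet> (F *v (a' - a))" by (simp add: w_def dot_lmul_matrix)
    then show ?thesis by (simp add: inner_diff matrix_vector_mult_diff_distrib inner_commute)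
  qed
  have "gl a \<bullet> (u - a') = g \<bullet> (u - a') + \<delta> \<bullet> (a' - u)"
    by (simp add: \<delta>_def inner_diff)
  then have primal: "l u - l a' + b' \<bullet> (F *v u) - b' \<bullet> (F *v a')
      \<ge> (p + L) / 2 * (norm (u - a'))\<^sup>2 - (p + L - \<mu>) / 2 * (norm (u - a))\<^sup>2
        + p / 2 * (norm (a' - a))\<^sup>2 + \<delta> \<bullet> (a' - u)"
    using smooth proj_x by (simp add: algebra_simps add_divide_distrib diff_divide_distrib)
  have dual: "b' \<bullet> (F *v a') - v \<bullet> (F *v a')
      \<ge> 1 / (2 * s) * (norm (v - b'))\<^sup>2 - 1 / (2 * s) * (norm (v - b))\<^sup>2 - K / p - p / 4 * (norm (a' - a))\<^sup>2"
    using proj_y coupling young_coupling by linarith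
  have "\<delta> \<bullet> (a' - u) \<ge> \<delta> \<bullet> (a - u) - (norm \<delta>)\<^sup>2 / p - p / 4 * (norm (a' - a))\<^sup>2"
    using young_noise by (simp add: inner_diff)
  moreover have "saddle_fun l F b' u - saddle_fun l F v a'
      = (l u - l a' + b' \<bullet> (F *v u) - b' \<bullet> (F *v a')) + (b' \<bullet> (F *v a') - v \<bullet> (F *v a'))"
    by (simp add: saddle_fun_def)
  ultimately show ?thesis
    using primal dual unfolding \<delta>_def[symmetric] K_def[symmetric] by (simp add: add_divide_distrib)
qed

lemma continuous_on_saddle_gap:
  fixes l :: "real^'d \<Rightarrow> real" and F :: "real^'d^'m"
  assumes "continuous_on X l"
  shows "continuous_on (Y \<times> X) (\<lambda>q. saddle_fun l F (fst q) u - saddle_fun l F v (snd q))"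
proof -
  have "continuous_on (Y \<times> X) (\<lambda>q. l (snd q))"
    by (rule continuous_on_compose2[OF assms continuous_on_snd]) auto
  moreover have "continuous_on (Y \<times> X) (\<lambda>q. F *v snd q)"
    by (rule continuous_on_compose2[OF matrix_vector_mult_linear_continuous_on continuous_on_snd]) auto
  ultimately show ?thesis unfolding saddle_fun_def by (intro continuous_intros)
qed

section \<open>Expectations\<close>

text \<open>Independence of \<open>Z\<close> and \<open>W\<close> is expressed through their joint distribution, since
  \<open>indep_var\<close> requires both random variables to take values in the same type.\<close>

lemma (in prob_space) nn_integral_independent_pair:
  assumes Z[measurable]: "Z \<in> measurable M S" and W[measurable]: "W \<in> measurable M T"
    and joint: "distr M (S \<Otimes>\<^sub>M T) (\<lambda>\<omega>. (Z \<omega>, W \<omega>)) = distr M S Z \<Otimes>\<^sub>M distr M T W"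
    and f[measurable]: "f \<in> borel_measurable (S \<Otimes>\<^sub>M T)"
  shows "(\<integral>\<^sup>+\<omega>. f (Z \<omega>, W \<omega>) \<partial>M) = (\<integral>\<^sup>+z. (\<integral>\<^sup>+\<omega>. f (z, W \<omega>) \<partial>M) \<partial>distr M S Z)"
proof -
  interpret PW: prob_space "distr M T W" by (rule prob_space_distr) measurable
  have "(\<integral>\<^sup>+\<omega>. f (Z \<omega>, W \<omega>) \<partial>M) = (\<integral>\<^sup>+p. f p \<partial>(distr M S Z \<Otimes>\<^sub>M distr M T W))"
    by (simp add: joint[symmetric] nn_integral_distr)
  also have "\<dots> = (\<integral>\<^sup>+z. \<integral>\<^sup>+e. f (z, e) \<partial>distr M T W \<partial>distr M S Z)"
    by (rule PW.nn_integral_fst[symmetric]) simp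
  also have "\<dots> = (\<integral>\<^sup>+z. (\<integral>\<^sup>+\<omega>. f (z, W \<omega>) \<partial>M) \<partial>distr M S Z)"
    by (intro nn_integral_cong) (simp add: nn_integral_distr)
  finally show ?thesis .
qed

lemma (in prob_space) integral_independent_pair:
  fixes f :: "_ \<Rightarrow> real"
  assumes Z[measurable]: "Z \<in> measurable M S" and W[measurable]: "W \<in> measurable M T"
    and joint: "distr M (S \<Otimes>\<^sub>M T) (\<lambda>\<omega>. (Z \<omega>, W \<omega>)) = distr M S Z \<Otimes>\<^sub>M distr M T W"
    and f[measurable]: "f \<in> borel_measurable (S \<Otimes>\<^sub>M T)"
    and int: "integrable M (\<lambda>\<omega>. f (Z \<omega>, W \<omega>))"
  shows "(\<integral>\<omega>. f (Z \<omega>, W \<omega>) \<partial>M) = (\<integral>z. (\<integral>\<omega>. f (z, W \<omega>) \<partial>M) \<partial>distr M S Z)"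
proof -
  interpret PZ: prob_space "distr M S Z" by (rule prob_space_distr) measurable
  interpret PW: prob_space "distr M T W" by (rule prob_space_distr) measurable
  interpret PZW: pair_prob_space "distr M S Z" "distr M T W" ..
  have "integrable (distr M S Z \<Otimes>\<^sub>M distr M T W) f"
    unfolding joint[symmetric] using int by (subst integrable_distr_eq) measurable
  have "(\<integral>\<omega>. f (Z \<omega>, W \<omega>) \<partial>M) = integral\<^sup>L (distr M S Z \<Otimes>\<^sub>M distr M T W) f"
    unfolding joint[symmetric] by (subst integral_distr) measurable
  also have "\<dots> = (\<integral>z. (\<integral>e. f (z, e) \<partial>distr M T W) \<partial>distr M S Z)"
    by (rule PZW.integral_fst'[symmetric]) fact
  also have "\<dots> = (\<integral>z. (\<integral>\<omega>. f (z, W \<omega>) \<partial>M) \<partial>distr M S Z)"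
    by (intro Bochner_Integration.integral_cong refl) (simp add: integral_distr)
  finally show ?thesis .
qed

lemma (in finite_measure) integrable_continuous_on_compact_valued:
  fixes Z :: "'a \<Rightarrow> 'c::t2_space" and f :: "'c \<Rightarrow> real"
  assumes K: "compact K" and f: "continuous_on K f"
    and Z[measurable]: "Z \<in> borel_measurable M" and ZK: "\<And>\<omega>. \<omega> \<in> space M \<Longrightarrow> Z \<omega> \<in> K"
  shows "integrable M (\<lambda>\<omega>. f (Z \<omega>))"
proof -
  have "K \<in> sets borel" using K by (simp add: compact_imp_closed)
  then have [measurable]: "(\<lambda>z. indicator K z *\<^sub>R f z) \<in> borel_measurable borel"
    using f by (rule borel_measurable_continuous_on_indicator)
  obtain B where B: "\<forall>z\<in>K. norm (f z) \<le> B"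
    using compact_imp_bounded[OF compact_continuous_image[OF f K]] by (auto simp: bounded_iff)
  show ?thesis
  proof (rule integrable_const_bound[where B = B])
    show "AE \<omega> in M. norm (f (Z \<omega>)) \<le> B" using B ZK by auto
    have "(\<lambda>\<omega>. indicator K (Z \<omega>) *\<^sub>R f (Z \<omega>)) \<in> borel_measurable M" by measurable
    then show "(\<lambda>\<omega>. f (Z \<omega>)) \<in> borel_measurable M"
      by (rule measurable_cong[THEN iffD1, rotated]) (simp add: ZK)
  qed
qed

lemma (in prob_space) integral_ge_of_step_inequality:
  fixes D A' B' A B V R :: "'a \<Rightarrow> real"
  assumes step: "\<And>\<omega>. \<omega> \<in> space M \<Longrightarrow>
      c' * A' \<omega> + d * B' \<omega> - c * A \<omega> - d * B \<omega> - (K + V \<omega>) / p + R \<omega> \<le> D \<omega>"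
    and int: "integrable M D" "integrable M A'" "integrable M B'" "integrable M A" "integrable M B"
      "integrable M V" "integrable M R"
    and V: "(\<integral>\<omega>. V \<omega> \<partial>M) \<le> v" and R: "(\<integral>\<omega>. R \<omega> \<partial>M) = 0" and p: "0 < p"
  shows "c' * (\<integral>\<omega>. A' \<omega> \<partial>M) + d * (\<integral>\<omega>. B' \<omega> \<partial>M) - c * (\<integral>\<omega>. A \<omega> \<partial>M) - d * (\<integral>\<omega>. B \<omega> \<partial>M)
      - (K + v) / p \<le> (\<integral>\<omega>. D \<omega> \<partial>M)"
proof -
  have "(K + (\<integral>\<omega>. V \<omega> \<partial>M)) / p \<le> (K + v) / p" using V p by (simp add: divide_right_mono)
  moreover have "(\<integral>\<omega>. c' * A' \<omega> + d * B' \<omega> - c * A \<omega> - d * B \<omega> - (K + V \<omega>) / p + R \<omega> \<partial>M)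
      = c' * (\<integral>\<omega>. A' \<omega> \<partial>M) + d * (\<integral>\<omega>. B' \<omega> \<partial>M) - c * (\<integral>\<omega>. A \<omega> \<partial>M) - d * (\<integral>\<omega>. B \<omega> \<partial>M)
        - (K + (\<integral>\<omega>. V \<omega> \<partial>M)) / p"
    using int R by (simp add: prob_space add_divide_distrib)
  moreover have "(\<integral>\<omega>. c' * A' \<omega> + d * B' \<omega> - c * A \<omega> - d * B \<omega> - (K + V \<omega>) / p + R \<omega> \<partial>M)
      \<le> (\<integral>\<omega>. D \<omega> \<partial>M)"
    using int step by (intro integral_mono) auto
  ultimately show ?thesis by linarith
qed

primrec sample_iterate :: "(nat \<Rightarrow> 'c \<Rightarrow> 'b \<Rightarrow> 'c) \<Rightarrow> 'c \<Rightarrow> nat \<Rightarrow> (nat \<Rightarrow> 'b) \<Rightarrow> 'c" where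
  "sample_iterate T c 0 w = c"
| "sample_iterate T c (Suc n) w = T n (sample_iterate T c n w) (w n)"

lemma sample_iterate_restrict:
  "n \<le> m \<Longrightarrow> sample_iterate T c n (restrict w {..<m}) = sample_iterate T c n w"
  by (induction n) auto

lemma measurable_sample_iterate:
  assumes T: "\<And>n. (\<lambda>(p, e). T n p e) \<in> measurable (borel \<Otimes>\<^sub>M N) borel"
    and "n \<le> m"
  shows "sample_iterate T c n \<in> measurable (PiM {..<m} (\<lambda>_. N)) borel"
  using \<open>n \<le> m\<close>
proof (induction n)
  case 0
  show ?case by simp
next
  case (Suc n)
  then have [measurable]: "sample_iterate T c n \<in> measurable (PiM {..<m} (\<lambda>_. N)) borel"
    by simp
  have "(\<lambda>w. (sample_iterate T c n w, w n)) \<in> measurable (PiM {..<m} (\<lambda>_. N)) (borel \<Otimes>\<^sub>M N)"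
    using Suc.prems by (intro measurable_Pair measurable_component_singleton) auto
  from measurable_compose[OF this T] show ?case by simp
qed

lemma (in prob_space) recursive_process_independent_of_next_sample:
  fixes z :: "nat \<Rightarrow> 'a \<Rightarrow> 'c::topological_space" and \<xi> :: "nat \<Rightarrow> 'a \<Rightarrow> 'e"
    and h :: "'c \<Rightarrow> 'f::topological_space"
  assumes \<xi>: "\<And>n. \<xi> n \<in> measurable M N" and ind: "indep_vars (\<lambda>_. N) \<xi> UNIV"
    and T: "\<And>n. (\<lambda>(p, e). T n p e) \<in> measurable (borel \<Otimes>\<^sub>M N) borel"
    and z0: "\<And>\<omega>. z 0 \<omega> = c" and zS: "\<And>n \<omega>. z (Suc n) \<omega> = T n (z n \<omega>) (\<xi> n \<omega>)"
    and h[measurable]: "h \<in> borel_measurable borel"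
  shows "(\<lambda>\<omega>. h (z n \<omega>)) \<in> borel_measurable M"
    and "distr M (borel \<Otimes>\<^sub>M N) (\<lambda>\<omega>. (h (z k \<omega>), \<xi> k \<omega>))
      = distr M borel (\<lambda>\<omega>. h (z k \<omega>)) \<Otimes>\<^sub>M distr M N (\<xi> k)"
proof -
  define W where "W A \<omega> = restrict (\<lambda>i. \<xi> i \<omega>) A" for A \<omega>
  have z_eq: "(\<lambda>\<omega>. h (z n \<omega>)) = (h \<circ> sample_iterate T c n) \<circ> W {..<n}" for n
  proof -
    have "z n \<omega> = sample_iterate T c n (\<lambda>i. \<xi> i \<omega>)" for \<omega>
      by (induction n) (simp_all add: z0 zS)
    then show ?thesis by (simp add: W_def fun_eq_iff sample_iterate_restrict)
  qed
  have \<xi>_eq: "\<xi> k = (\<lambda>w. w k) \<circ> W {k}" by (simp add: W_def fun_eq_iff)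
  have [measurable]: "W A \<in> measurable M (PiM A (\<lambda>_. N))" for A
    unfolding W_def using \<xi> by measurable
  have [measurable]: "h \<circ> sample_iterate T c n \<in> measurable (PiM {..<n} (\<lambda>_. N)) borel" for n
    using measurable_sample_iterate[OF T order_refl] by (simp add: comp_def)
  have [measurable]: "(\<lambda>w. w k) \<in> measurable (PiM {k} (\<lambda>_. N)) N"
    by (rule measurable_component_singleton) simp
  show "(\<lambda>\<omega>. h (z n \<omega>)) \<in> borel_measurable M" unfolding z_eq by measurable
  let ?S = "PiM {..<k} (\<lambda>_. N)" and ?T = "PiM {k} (\<lambda>_. N)"
  have "indep_var ?S (W {..<k}) ?T (W {k})"
    unfolding W_def by (rule indep_var_restrict[OF ind]) auto
  then have joint: "distr M ?S (W {..<k}) \<Otimes>\<^sub>M distr M ?T (W {k})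
      = distr M (?S \<Otimes>\<^sub>M ?T) (\<lambda>\<omega>. (W {..<k} \<omega>, W {k} \<omega>))"
    unfolding indep_var_distribution_eq by blast
  interpret PW: prob_space "distr M ?T (W {k})" by (rule prob_space_distr) measurable
  have "distr M borel (\<lambda>\<omega>. h (z k \<omega>)) \<Otimes>\<^sub>M distr M N (\<xi> k)
      = distr (distr M ?S (W {..<k})) borel (h \<circ> sample_iterate T c k) \<Otimes>\<^sub>M distr (distr M ?T (W {k})) N (\<lambda>w. w k)"
    unfolding z_eq \<xi>_eq by (simp add: distr_distr)
  also have "\<dots> = distr (distr M (?S \<Otimes>\<^sub>M ?T) (\<lambda>\<omega>. (W {..<k} \<omega>, W {k} \<omega>))) (borel \<Otimes>\<^sub>M N)
      (\<lambda>(a, b). ((h \<circ> sample_iterate T c k) a, b k))"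
    unfolding joint[symmetric]
    by (rule pair_measure_distr) (simp_all add: prob_space_imp_sigma_finite PW.prob_space_distr)
  also have "\<dots> = distr M (borel \<Otimes>\<^sub>M N)
      ((\<lambda>(a, b). ((h \<circ> sample_iterate T c k) a, b k)) \<circ> (\<lambda>\<omega>. (W {..<k} \<omega>, W {k} \<omega>)))"
    by (rule distr_distr) measurable
  also have "(\<lambda>(a, b). ((h \<circ> sample_iterate T c k) a, b k)) \<circ> (\<lambda>\<omega>. (W {..<k} \<omega>, W {k} \<omega>))
      = (\<lambda>\<omega>. (h (z k \<omega>), \<xi> k \<omega>))"
    using z_eq[of k] \<xi>_eq by (simp add: fun_eq_iff)
  finally show "distr M (borel \<Otimes>\<^sub>M N) (\<lambda>\<omega>. (h (z k \<omega>), \<xi> k \<omega>))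
      = distr M borel (\<lambda>\<omega>. h (z k \<omega>)) \<Otimes>\<^sub>M distr M N (\<xi> k)" ..
qed

lemma (in prob_space) gradient_variance_at_independent_point:
  fixes Z :: "'a \<Rightarrow> 'c::euclidean_space" and \<xi> :: "'a \<Rightarrow> 'e" and N :: "'e measure"
    and G :: "'c \<Rightarrow> 'e \<Rightarrow> 'c"
  assumes Z[measurable]: "Z \<in> borel_measurable M" and \<xi>[measurable]: "\<xi> \<in> measurable M N"
    and joint: "distr M (borel \<Otimes>\<^sub>M N) (\<lambda>\<omega>. (Z \<omega>, \<xi> \<omega>)) = distr M borel Z \<Otimes>\<^sub>M distr M N \<xi>"
    and ZX: "\<And>\<omega>. \<omega> \<in> space M \<Longrightarrow> Z \<omega> \<in> X"
    and X: "closed X" and g: "continuous_on X g"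
    and G: "(\<lambda>(z, e). G z e) \<in> borel_measurable (borel \<Otimes>\<^sub>M N)"
    and variance: "\<forall>z\<in>X. integrable M (\<lambda>\<omega>. (norm (G z (\<xi> \<omega>) - g z))\<^sup>2) \<and>
                       (\<integral>\<omega>. (norm (G z (\<xi> \<omega>) - g z))\<^sup>2 \<partial>M) \<le> \<sigma>\<^sup>2"
  shows "integrable M (\<lambda>\<omega>. (norm (G (Z \<omega>) (\<xi> \<omega>) - g (Z \<omega>)))\<^sup>2)"
    and "(\<integral>\<omega>. (norm (G (Z \<omega>) (\<xi> \<omega>) - g (Z \<omega>)))\<^sup>2 \<partial>M) \<le> \<sigma>\<^sup>2"
proof -
  have [measurable]: "X \<in> sets borel" using X by simp
  have [measurable]: "(\<lambda>p. G (fst p) (snd p)) \<in> borel_measurable (borel \<Otimes>\<^sub>M N)"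
    using G by (simp add: case_prod_beta')
  \<comment> \<open>\<open>g\<close> is only continuous on \<open>X\<close>; its extension by zero is Borel measurable\<close>
  define V where "V p = (norm (G (fst p) (snd p) - indicator X (fst p) *\<^sub>R g (fst p)))\<^sup>2" for p
  have [measurable]: "(\<lambda>z. indicator X z *\<^sub>R g z) \<in> borel_measurable borel"
    by (rule borel_measurable_continuous_on_indicator) (use X g in auto)
  have V_eq: "V (Z \<omega>, \<xi> \<omega>) = (norm (G (Z \<omega>) (\<xi> \<omega>) - g (Z \<omega>)))\<^sup>2" if "\<omega> \<in> space M" for \<omega>
    using ZX[OF that] by (simp add: V_def)
  interpret PZ: prob_space "distr M borel Z" by (rule prob_space_distr) measurable
  have "(\<integral>\<^sup>+\<omega>. V (Z \<omega>, \<xi> \<omega>) \<partial>M) = (\<integral>\<^sup>+z. (\<integral>\<^sup>+\<omega>. V (z, \<xi> \<omega>) \<partial>M) \<partial>distr M borel Z)"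
    by (rule nn_integral_independent_pair[OF Z \<xi> joint]) (simp add: V_def)
  also have "\<dots> \<le> (\<integral>\<^sup>+z. ennreal (\<sigma>\<^sup>2) \<partial>distr M borel Z)"
  proof (rule nn_integral_mono_AE)
    have "AE z in distr M borel Z. z \<in> X"
      using ZX by (subst AE_distr_iff) (auto intro: AE_I2)
    then show "AE z in distr M borel Z. (\<integral>\<^sup>+\<omega>. V (z, \<xi> \<omega>) \<partial>M) \<le> ennreal (\<sigma>\<^sup>2)"
    proof eventually_elim
      case (elim z)
      then have "(\<integral>\<^sup>+\<omega>. V (z, \<xi> \<omega>) \<partial>M) = ennreal (\<integral>\<omega>. (norm (G z (\<xi> \<omega>) - g z))\<^sup>2 \<partial>M)"
        using variance by (simp add: V_def nn_integral_eq_integral)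
      then show ?case using variance elim by (simp add: ennreal_leI)
    qed
  qed
  finally have V_bound: "(\<integral>\<^sup>+\<omega>. V (Z \<omega>, \<xi> \<omega>) \<partial>M) \<le> ennreal (\<sigma>\<^sup>2)"
    using PZ.emeasure_space_1 by simp
  have V_meas: "(\<lambda>\<omega>. V (Z \<omega>, \<xi> \<omega>)) \<in> borel_measurable M" unfolding V_def by measurable
  have "integrable M (\<lambda>\<omega>. V (Z \<omega>, \<xi> \<omega>))"
    unfolding integrable_iff_bounded using V_meas V_bound by (simp add: V_def le_less_trans)
  then show "integrable M (\<lambda>\<omega>. (norm (G (Z \<omega>) (\<xi> \<omega>) - g (Z \<omega>)))\<^sup>2)"
    using Bochner_Integration.integrable_cong[OF refl, of _ "\<lambda>\<omega>. V (Z \<omega>, \<xi> \<omega>)"] V_eq by simp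
  have "(\<integral>\<omega>. V (Z \<omega>, \<xi> \<omega>) \<partial>M) \<le> \<sigma>\<^sup>2"
    using V_bound V_meas by (subst integral_eq_nn_integral) (auto simp: V_def intro: enn2real_leI)
  then show "(\<integral>\<omega>. (norm (G (Z \<omega>) (\<xi> \<omega>) - g (Z \<omega>)))\<^sup>2 \<partial>M) \<le> \<sigma>\<^sup>2"
    by (simp add: V_eq cong: Bochner_Integration.integral_cong)
qed

lemma (in prob_space) gradient_noise_orthogonal_at_independent_point:
  fixes Z :: "'a \<Rightarrow> 'c::euclidean_space" and \<xi> :: "'a \<Rightarrow> 'e" and N :: "'e measure"
    and G :: "'c \<Rightarrow> 'e \<Rightarrow> 'c"
  assumes Z[measurable]: "Z \<in> borel_measurable M" and \<xi>[measurable]: "\<xi> \<in> measurable M N"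
    and joint: "distr M (borel \<Otimes>\<^sub>M N) (\<lambda>\<omega>. (Z \<omega>, \<xi> \<omega>)) = distr M borel Z \<Otimes>\<^sub>M distr M N \<xi>"
    and ZX: "\<And>\<omega>. \<omega> \<in> space M \<Longrightarrow> Z \<omega> \<in> X"
    and X: "compact X" and g: "continuous_on X g"
    and G: "(\<lambda>(z, e). G z e) \<in> borel_measurable (borel \<Otimes>\<^sub>M N)"
    and unbiased: "\<forall>z\<in>X. integrable M (\<lambda>\<omega>. G z (\<xi> \<omega>)) \<and> (\<integral>\<omega>. G z (\<xi> \<omega>) \<partial>M) = g z"
    and square_int: "integrable M (\<lambda>\<omega>. (norm (G (Z \<omega>) (\<xi> \<omega>) - g (Z \<omega>)))\<^sup>2)"
  shows "integrable M (\<lambda>\<omega>. (G (Z \<omega>) (\<xi> \<omega>) - g (Z \<omega>)) \<bullet> (Z \<omega> - u))"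
    and "(\<integral>\<omega>. (G (Z \<omega>) (\<xi> \<omega>) - g (Z \<omega>)) \<bullet> (Z \<omega> - u) \<partial>M) = 0"
proof -
  have [measurable]: "X \<in> sets borel" using X by (simp add: compact_imp_closed)
  have [measurable]: "(\<lambda>p. G (fst p) (snd p)) \<in> borel_measurable (borel \<Otimes>\<^sub>M N)"
    using G by (simp add: case_prod_beta')
  define C where "C p = (G (fst p) (snd p) - indicator X (fst p) *\<^sub>R g (fst p)) \<bullet> (fst p - u)" for p
  have [measurable]: "(\<lambda>z. indicator X z *\<^sub>R g z) \<in> borel_measurable borel"
    by (rule borel_measurable_continuous_on_indicator) (use X g in auto)
  have C_eq: "C (Z \<omega>, \<xi> \<omega>) = (G (Z \<omega>) (\<xi> \<omega>) - g (Z \<omega>)) \<bullet> (Z \<omega> - u)" if "\<omega> \<in> space M" for \<omega>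
    using ZX[OF that] by (simp add: C_def)
  obtain R where R: "\<And>z. z \<in> X \<Longrightarrow> norm (z - u) \<le> R"
    using compact_imp_bounded[OF X] by (meson bounded_iff norm_triangle_ineq4 add_mono order_trans order_refl)
  \<comment> \<open>\<open>|\<langle>d, z - u\<rangle>| \<le> R |d| \<le> R (1 + |d|\<^sup>2)\<close>\<close>
  have C_int: "integrable M (\<lambda>\<omega>. C (Z \<omega>, \<xi> \<omega>))"
  proof (rule Bochner_Integration.integrable_bound)
    show "integrable M (\<lambda>\<omega>. R * (1 + (norm (G (Z \<omega>) (\<xi> \<omega>) - g (Z \<omega>)))\<^sup>2))"
      using square_int by auto
    show "(\<lambda>\<omega>. C (Z \<omega>, \<xi> \<omega>)) \<in> borel_measurable M" unfolding C_def by measurable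
    show "AE \<omega> in M. norm (C (Z \<omega>, \<xi> \<omega>)) \<le> norm (R * (1 + (norm (G (Z \<omega>) (\<xi> \<omega>) - g (Z \<omega>)))\<^sup>2))"
    proof (intro AE_I2)
      fix \<omega> assume \<omega>: "\<omega> \<in> space M"
      define d where "d = norm (G (Z \<omega>) (\<xi> \<omega>) - g (Z \<omega>))"
      have "0 \<le> d" by (simp add: d_def)
      then have "d \<le> 1 + d\<^sup>2"
        using zero_le_power2[of "d - 1"] unfolding power2_diff by simp
      then have "d * norm (Z \<omega> - u) \<le> (1 + d\<^sup>2) * R"
        using R[OF ZX[OF \<omega>]] by (intro mult_mono) (auto simp: d_def)
      then show "norm (C (Z \<omega>, \<xi> \<omega>)) \<le> norm (R * (1 + d\<^sup>2))"
        unfolding C_eq[OF \<omega>] d_def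
        by (smt (verit) Cauchy_Schwarz_ineq2 mult.commute real_norm_def zero_le_power2)
    qed
  qed
  then show "integrable M (\<lambda>\<omega>. (G (Z \<omega>) (\<xi> \<omega>) - g (Z \<omega>)) \<bullet> (Z \<omega> - u))"
    using Bochner_Integration.integrable_cong[OF refl, of _ "\<lambda>\<omega>. C (Z \<omega>, \<xi> \<omega>)"] C_eq by simp
  have "(\<integral>\<omega>. C (Z \<omega>, \<xi> \<omega>) \<partial>M) = (\<integral>z. (\<integral>\<omega>. C (z, \<xi> \<omega>) \<partial>M) \<partial>distr M borel Z)"
    using C_int by (intro integral_independent_pair[OF Z \<xi> joint]) (simp_all add: C_def)
  also have "\<dots> = 0"
  proof (rule integral_eq_zero_AE)
    have "AE z in distr M borel Z. z \<in> X"
      using ZX by (subst AE_distr_iff) (auto intro: AE_I2)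
    then show "AE z in distr M borel Z. (\<integral>\<omega>. C (z, \<xi> \<omega>) \<partial>M) = 0"
    proof eventually_elim
      case (elim z)
      then have "(\<integral>\<omega>. C (z, \<xi> \<omega>) \<partial>M) = (\<integral>\<omega>. G z (\<xi> \<omega>) - g z \<partial>M) \<bullet> (z - u)"
        using unbiased by (simp add: C_def integral_inner_left)
      then show ?case using unbiased elim by (simp add: prob_space)
    qed
  qed
  finally show "(\<integral>\<omega>. (G (Z \<omega>) (\<xi> \<omega>) - g (Z \<omega>)) \<bullet> (Z \<omega> - u) \<partial>M) = 0"
    by (simp add: C_eq cong: Bochner_Integration.integral_cong)
qed

lemma (in prob_space) spdhg_iterates_measurable_independent:
  fixes X :: "(real^'d) set" and Y :: "(real^'m) set" and F :: "real^'d^'m"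
    and \<xi> :: "nat \<Rightarrow> 'a \<Rightarrow> 'e" and G :: "real^'d \<Rightarrow> 'e \<Rightarrow> real^'d"
    and x :: "nat \<Rightarrow> 'a \<Rightarrow> real^'d" and y :: "nat \<Rightarrow> 'a \<Rightarrow> real^'m"
  assumes X: "X \<noteq> {}" "convex X" "closed X" and Y: "Y \<noteq> {}" "convex Y" "closed Y"
    and \<xi>: "\<And>n. \<xi> n \<in> measurable M N" and ind: "indep_vars (\<lambda>_. N) \<xi> UNIV"
    and G: "(\<lambda>(z, e). G z e) \<in> borel_measurable (borel \<Otimes>\<^sub>M N)"
    and x0: "\<And>\<omega>. x 0 \<omega> = x0" and y0: "\<And>\<omega>. y 0 \<omega> = y0"
    and y_step: "\<And>n \<omega>. y (Suc n) \<omega> = closest_point Y (y n \<omega> + s *\<^sub>R (F *v x n \<omega>))"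
    and x_step: "\<And>n \<omega>. x (Suc n) \<omega>
      = closest_point X (x n \<omega> - \<beta> n *\<^sub>R (G (x n \<omega>) (\<xi> n \<omega>) + transpose F *v y (Suc n) \<omega>))"
  shows "x n \<in> borel_measurable M" and "y n \<in> borel_measurable M"
    and "distr M (borel \<Otimes>\<^sub>M N) (\<lambda>\<omega>. (x k \<omega>, \<xi> k \<omega>)) = distr M borel (x k) \<Otimes>\<^sub>M distr M N (\<xi> k)"
proof -
  have [measurable]: "closest_point X \<in> borel_measurable borel" "closest_point Y \<in> borel_measurable borel"
    using continuous_on_closest_point X Y by (auto intro: borel_measurable_continuous_onI)
  have [measurable]: "(*v) A \<in> borel_measurable borel" for A :: "real^'p^'q"
    by (intro borel_measurable_continuous_onI matrix_vector_mult_linear_continuous_on)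
  have [measurable]: "fst \<in> borel_measurable borel" "snd \<in> borel_measurable borel"
    by (auto intro!: borel_measurable_continuous_onI continuous_intros)
  have [measurable]: "(\<lambda>q. fst (fst q)) \<in> borel_measurable (borel \<Otimes>\<^sub>M N)"
    "(\<lambda>q. snd (fst q)) \<in> borel_measurable (borel \<Otimes>\<^sub>M N)"
    by (rule measurable_compose[OF measurable_fst], simp)+
  have [measurable]: "(\<lambda>q. G (fst (fst q)) (snd q)) \<in> borel_measurable (borel \<Otimes>\<^sub>M N)"
  proof -
    have "(\<lambda>q. (fst (fst q), snd q)) \<in> measurable (borel \<Otimes>\<^sub>M N) (borel \<Otimes>\<^sub>M N)" by measurable
    from measurable_compose[OF this G] show ?thesis by simp
  qed
  define Sy where "Sy p = closest_point Y (snd p + s *\<^sub>R (F *v fst p))" for p :: "(real^'d) \<times> (real^'m)"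
  define T where "T n p e = (closest_point X (fst p - \<beta> n *\<^sub>R (G (fst p) e + transpose F *v Sy p)), Sy p)"
    for n p e
  have T: "(\<lambda>(p, e). T n p e) \<in> measurable (borel \<Otimes>\<^sub>M N) borel" for n
    unfolding T_def Sy_def case_prod_beta' by measurable
  have z0: "(x 0 \<omega>, y 0 \<omega>) = (x0, y0)" for \<omega> by (simp add: x0 y0)
  have zS: "(x (Suc n) \<omega>, y (Suc n) \<omega>) = T n (x n \<omega>, y n \<omega>) (\<xi> n \<omega>)" for n \<omega>
    by (simp add: T_def Sy_def x_step y_step)
  note process = recursive_process_independent_of_next_sample
    [where z = "\<lambda>n \<omega>. (x n \<omega>, y n \<omega>)" and c = "(x0, y0)", OF \<xi> ind T z0 zS]
  show "x n \<in> borel_measurable M" "y n \<in> borel_measurable M"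
    using process(1)[of fst n] process(1)[of snd n] by simp_all
  show "distr M (borel \<Otimes>\<^sub>M N) (\<lambda>\<omega>. (x k \<omega>, \<xi> k \<omega>)) = distr M borel (x k) \<Otimes>\<^sub>M distr M N (\<xi> k)"
    using process(2)[of fst k] by simp
qed

theorem lemma3:
  fixes X :: "(real^'d) set" and Y :: "(real^'m) set" and F :: "real^'d^'m"
    and l :: "real^'d \<Rightarrow> real" and gl :: "real^'d \<Rightarrow> real^'d"
    and L \<mu> \<sigma> s :: real
    and M :: "'a measure" and N :: "'b measure"
    and \<xi> :: "nat \<Rightarrow> 'a \<Rightarrow> 'b"
    and G :: "real^'d \<Rightarrow> 'b \<Rightarrow> real^'d"
    and x :: "nat \<Rightarrow> 'a \<Rightarrow> real^'d" and y :: "nat \<Rightarrow> 'a \<Rightarrow> real^'m"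
    and x0 :: "real^'d" and y0 :: "real^'m"
    and xs :: "real^'d" and ys :: "real^'m"
    and k :: nat
  assumes X: "X \<noteq> {}" "convex X" "compact X"
    and Y: "Y \<noteq> {}" "convex Y" "compact Y"
    and l_deriv: "\<forall>z\<in>X. (l has_derivative (\<lambda>h. gl z \<bullet> h)) (at z within X)"
    and gl_cont: "continuous_on X gl"
    and l_convex: "convex_on X l"
    and L_nonneg: "0 \<le> L"
    and gl_lip: "\<forall>x1\<in>X. \<forall>x2\<in>X. norm (gl x1 - gl x2) \<le> L * norm (x1 - x2)"
    and mu_pos: "0 < \<mu>"
    and strong: "\<forall>u\<in>X. \<forall>v\<in>X. l v - l u - (v - u) \<bullet> gl u \<ge> \<mu> / 2 * (norm (v - u))\<^sup>2"
    and sigma_pos: "0 < \<sigma>"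
    and s_pos: "0 < s"
    and prob: "prob_space M"
    and xi_meas: "\<forall>n. \<xi> n \<in> measurable M N"
    and xi_indep: "prob_space.indep_vars M (\<lambda>_. N) \<xi> UNIV"
    and xi_ident: "\<forall>n. distr M N (\<xi> n) = distr M N (\<xi> 0)"
    and G_meas: "(\<lambda>(z, e). G z e) \<in> borel_measurable (borel \<Otimes>\<^sub>M N)"
    and G_unbiased: "\<forall>n. \<forall>z\<in>X. integrable M (\<lambda>\<omega>. G z (\<xi> n \<omega>)) \<and>
                        (\<integral>\<omega>. G z (\<xi> n \<omega>) \<partial>M) = gl z"
    and G_var: "\<forall>n. \<forall>z\<in>X. integrable M (\<lambda>\<omega>. (norm (G z (\<xi> n \<omega>) - gl z))\<^sup>2) \<and>
                        (\<integral>\<omega>. (norm (G z (\<xi> n \<omega>) - gl z))\<^sup>2 \<partial>M) \<le> \<sigma>\<^sup>2"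
    and x0_in: "x0 \<in> X" and y0_in: "y0 \<in> Y"
    and x_init: "\<forall>\<omega>. x 0 \<omega> = x0" and y_init: "\<forall>\<omega>. y 0 \<omega> = y0"
    and y_step: "\<forall>n \<omega>. y (Suc n) \<omega> \<in> Y \<and>
        (\<forall>v\<in>Y. saddle_fun l F v (x n \<omega>) - 1 / (2 * s) * (norm (v - y n \<omega>))\<^sup>2
              \<le> saddle_fun l F (y (Suc n) \<omega>) (x n \<omega>) - 1 / (2 * s) * (norm (y (Suc n) \<omega> - y n \<omega>))\<^sup>2)"
    and x_step: "\<forall>n \<omega>. x (Suc n) \<omega> = closest_point X
        (x n \<omega> - (1 / (\<mu> * (real n + 1) + L)) *\<^sub>R (G (x n \<omega>) (\<xi> n \<omega>) + transpose F *v y (Suc n) \<omega>))"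
    and saddle: "is_saddle_point (saddle_fun l F) Y X ys xs"
  shows "0 \<ge> (\<integral>\<omega>. saddle_fun l F (y (Suc k) \<omega>) xs - saddle_fun l F ys (x (Suc k) \<omega>) \<partial>M)
    \<and> (\<integral>\<omega>. saddle_fun l F (y (Suc k) \<omega>) xs - saddle_fun l F ys (x (Suc k) \<omega>) \<partial>M)
      \<ge> (\<mu> * (real k + 1) + L) / 2 * (\<integral>\<omega>. (norm (xs - x (Suc k) \<omega>))\<^sup>2 \<partial>M)
        + 1 / (2 * s) * (\<integral>\<omega>. (norm (ys - y (Suc k) \<omega>))\<^sup>2 \<partial>M)
        - (\<mu> * real k + L) / 2 * (\<integral>\<omega>. (norm (xs - x k \<omega>))\<^sup>2 \<partial>M)
        - 1 / (2 * s) * (\<integral>\<omega>. (norm (ys - y k \<omega>))\<^sup>2 \<partial>M)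
        - (lambda_max (transpose F ** F) * (diameter Y)\<^sup>2 + \<sigma>\<^sup>2) / (\<mu> * (real k + 1))"
proof -
  interpret prob_space M by (rule prob)
  have cX: "closed X" and cY: "closed Y" and bY: "bounded Y"
    using X Y by (simp_all add: compact_imp_closed compact_imp_bounded)
  have xs_in: "xs \<in> X" and ys_in: "ys \<in> Y" using saddle by (simp_all add: is_saddle_point_def)
  have in_X: "x n \<omega> \<in> X" for n \<omega>
    using x0_in closest_point_in_set[OF cX X(1)] by (cases n) (simp_all add: x_init x_step)
  have in_Y: "y n \<omega> \<in> Y" for n \<omega>
    using y0_in y_step by (cases n) (simp_all add: y_init)
  have y_proj: "y (Suc n) \<omega> = closest_point Y (y n \<omega> + s *\<^sub>R (F *v x n \<omega>))" for n \<omega>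
    using y_step by (intro argmax_inner_minus_sq_eq_closest_point[OF Y(2) cY _ s_pos]) (auto simp: saddle_fun_def)
  note iterates = spdhg_iterates_measurable_independent[where \<beta> = "\<lambda>n. 1 / (\<mu> * (real n + 1) + L)",
      OF X(1,2) cX Y(1,2) cY xi_meas[rule_format] xi_indep G_meas x_init[rule_format] y_init[rule_format]
      y_proj x_step[rule_format]]
  note variance = gradient_variance_at_independent_point[OF iterates(1) xi_meas[rule_format] iterates(3)
      in_X cX gl_cont G_meas spec[OF G_var]]
  note noise = gradient_noise_orthogonal_at_independent_point[OF iterates(1) xi_meas[rule_format] iterates(3)
      in_X X(3) gl_cont G_meas spec[OF G_unbiased] variance(1)]
  have p: "0 < \<mu> * (real k + 1)" using mu_pos by simp
  have coeff: "\<mu> * (real k + 1) + L - \<mu> = \<mu> * real k + L" by (simp add: algebra_simps)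
  note step = spdhg_step_inequality[OF X(2) cX Y(2) cY bY l_deriv gl_lip L_nonneg strong p s_pos
      in_X xs_in ys_in y_proj x_step[rule_format], unfolded coeff]
  have l_cont: "continuous_on X l" using l_deriv by (intro has_derivative_continuous_on) auto
  have gap_int: "integrable M (\<lambda>\<omega>. saddle_fun l F (y (Suc k) \<omega>) xs - saddle_fun l F ys (x (Suc k) \<omega>))"
    using integrable_continuous_on_compact_valued[OF compact_Times[OF Y(3) X(3)]
        continuous_on_saddle_gap[where F = F and u = xs and v = ys, OF l_cont],
        of "\<lambda>\<omega>. (y (Suc k) \<omega>, x (Suc k) \<omega>)"] iterates in_X in_Y
    by auto
  have sq_cont: "continuous_on K (\<lambda>w. (norm (c - w))\<^sup>2)" for K and c :: "real^'q" by (intro continuous_intros)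
  have sq_int: "integrable M (\<lambda>\<omega>. (norm (xs - x n \<omega>))\<^sup>2)" "integrable M (\<lambda>\<omega>. (norm (ys - y n \<omega>))\<^sup>2)" for n
    using integrable_continuous_on_compact_valued[OF X(3) sq_cont iterates(1) in_X]
      integrable_continuous_on_compact_valued[OF Y(3) sq_cont iterates(2) in_Y] by auto
  have "saddle_fun l F (y (Suc k) \<omega>) xs - saddle_fun l F ys (x (Suc k) \<omega>) \<le> 0" for \<omega>
    using saddle in_X in_Y unfolding is_saddle_point_def by (smt (verit))
  then have "(\<integral>\<omega>. saddle_fun l F (y (Suc k) \<omega>) xs - saddle_fun l F ys (x (Suc k) \<omega>) \<partial>M) \<le> 0"
    using integral_mono[OF gap_int integrable_zero] by simp
  then show ?thesis
    by (intro conjI integral_ge_of_step_inequality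
          [where V = "\<lambda>\<omega>. (norm (G (x k \<omega>) (\<xi> k \<omega>) - gl (x k \<omega>)))\<^sup>2"
            and R = "\<lambda>\<omega>. (G (x k \<omega>) (\<xi> k \<omega>) - gl (x k \<omega>)) \<bullet> (x k \<omega> - xs)"] step)
      (use gap_int variance noise sq_int p in auto)
qed

end
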